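(* Let $z\ge1$, $X\subset[\Delta]^d$ finite, $x\in X$ and $p\in X$ fixed, and $r=\|x-p\|_2$. Let $Q\subseteq X$ be a set of at most $k$ centers containing $p$ that is a constant-factor approximation to the optimal $(k,z)$-medoids clustering on $X$ among sets containing a center at $p$, and let $\Psi$ be a constant-factor approximation to $\mathrm{Cost}(X,Q)$. Let $S$ be an optimal $(k,z)$-medoids clustering on $X$ among sets containing a center at $p$ and no center in the interior of $B_r(x)$. Let $n_b$ be the number of points of $X$ assigned by $Q$ to centers in $B_{r/2}(x)$ and let $n_a$ be the number of points assigned by $Q$ to centers in the annulus $B_r(x)\setminus B_{r/2}(x)$. If $n_b\ge n_a$, then there exist constants $\gamma_1,\gamma_2\ge1$ such that \[\mathrm{Cost}(X,S)\le\gamma_1(\Psi+n_b\cdot r^z)\le(\gamma_1\gamma_2)\cdot\mathrm{Cost}(X,S).\]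
   Context: $\mathrm{Cost}(X,C)=\sum_{y\in X}\min_{c\in C}\|y-c\|_2^z$; a point is assigned by $Q$ to its closest center in $Q$. A $(k,z)$-medoids clustering is a set of at most $k$ centers chosen from $X$. $B_\rho(x)$ denotes the Euclidean ball of radius $\rho$ centered at $x$. "Constant-factor approximation" means within a multiplicative constant factor; the constants $\gamma_1,\gamma_2$ may depend on these constants and on $z$. *)

theory Defs
  imports "HOL-Analysis.Analysis"
begin

text \<open>Points of R^d are represented as functions nat => real whose coordinates
  with index >= d vanish, so that the dimension d can be quantified inside the
  statement (the constants gamma must not depend on d or Delta).\<close>

definition edist :: "nat \<Rightarrow> (nat \<Rightarrow> real) \<Rightarrow> (nat \<Rightarrow> real) \<Rightarrow> real" where
  "edist d u v = sqrt (\<Sum>i<d. (u i - v i)^2)"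

definition grid :: "nat \<Rightarrow> nat \<Rightarrow> (nat \<Rightarrow> real) set" where
  "grid d \<Delta> = {v. (\<forall>i<d. v i \<in> real ` {1..\<Delta>}) \<and> (\<forall>i. d \<le> i \<longrightarrow> v i = 0)}"

definition eball :: "nat \<Rightarrow> (nat \<Rightarrow> real) \<Rightarrow> real \<Rightarrow> (nat \<Rightarrow> real) set" where
  "eball d x \<rho> = {c. edist d x c \<le> \<rho>}"

definition eball_open :: "nat \<Rightarrow> (nat \<Rightarrow> real) \<Rightarrow> real \<Rightarrow> (nat \<Rightarrow> real) set" where
  "eball_open d x \<rho> = {c. edist d x c < \<rho>}"

definition cost :: "nat \<Rightarrow> real \<Rightarrow> (nat \<Rightarrow> real) set \<Rightarrow> (nat \<Rightarrow> real) set \<Rightarrow> real" where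
  "cost d z X C = (\<Sum>y\<in>X. Min ((\<lambda>c. edist d y c powr z) ` C))"

definition medoids_p :: "(nat \<Rightarrow> real) set \<Rightarrow> nat \<Rightarrow> (nat \<Rightarrow> real) \<Rightarrow> (nat \<Rightarrow> real) set \<Rightarrow> bool" where
  "medoids_p X k p C \<longleftrightarrow> C \<subseteq> X \<and> card C \<le> k \<and> p \<in> C"

definition nearest_assignment ::
  "nat \<Rightarrow> (nat \<Rightarrow> real) set \<Rightarrow> (nat \<Rightarrow> real) set \<Rightarrow> ((nat \<Rightarrow> real) \<Rightarrow> (nat \<Rightarrow> real)) \<Rightarrow> bool" where
  "nearest_assignment d X Q \<sigma> \<longleftrightarrow>
     (\<forall>y\<in>X. \<sigma> y \<in> Q \<and> (\<forall>c\<in>Q. edist d y (\<sigma> y) \<le> edist d y c))"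

end

theory Submission
  imports Defs
begin

text \<open>Let \<open>n\<^sub>o\<close> count the points that \<open>Q\<close> assigns to centers in the open ball of
  radius \<open>r\<close> around \<open>x\<close>; \<open>n\<^sub>b \<ge> n\<^sub>a\<close> gives \<open>n\<^sub>o \<le> 2 n\<^sub>b\<close>. Deleting these centers from \<open>Q\<close>
  leaves a set admissible for \<open>S\<close>, and a point that lost its center is served by \<open>p\<close>, which
  lies within \<open>2r\<close> of that center; hence \<open>Cost(X,S) \<le> 2\<^sup>z Cost(X,Q) + 4\<^sup>z n\<^sub>o r\<^sup>z\<close>.
  Conversely, a point that \<open>Q\<close> serves from \<open>B\<^sub>r\<^sub>/\<^sub>2(x)\<close> while \<open>S\<close> serves it from outside the
  open ball is at total distance at least \<open>r/2\<close> from its two centers, so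
  \<open>n\<^sub>b r\<^sup>z \<le> 4\<^sup>z (Cost(X,Q) + Cost(X,S))\<close>. Combined with \<open>Cost(X,Q) \<le> \<alpha> Cost(X,S)\<close> and the
  \<open>\<beta>\<close>-approximation \<open>\<Psi>\<close>, this gives the claim with \<open>\<gamma>\<^sub>1 = 2\<cdot>4\<^sup>z \<beta>\<close> and
  \<open>\<gamma>\<^sub>2 = \<alpha>\<beta> + 4\<^sup>z (\<alpha> + 1)\<close>.\<close>

lemma edist_nonneg: "0 \<le> edist d u v"
  unfolding edist_def by (simp add: sum_nonneg)

lemma edist_commute: "edist d u v = edist d v u"
  unfolding edist_def by (simp add: power2_commute)

lemma edist_triangle: "edist d u w \<le> edist d u v + edist d v w"
proof -
  have L2: "edist d a b = L2_set (\<lambda>i. a i - b i) {..<d}" for a b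
    unfolding edist_def L2_set_def by simp
  have "edist d u w = L2_set (\<lambda>i. (u i - v i) + (v i - w i)) {..<d}"
    unfolding L2 by simp
  also have "\<dots> \<le> edist d u v + edist d v w"
    unfolding L2 by (rule L2_set_triangle_ineq)
  finally show ?thesis .
qed

lemma powr_le_two_powr_mult_add:
  fixes a b t z :: real
  assumes "0 \<le> a" "0 \<le> b" "0 \<le> t" "t \<le> a + b" "0 \<le> z"
  shows "t powr z \<le> 2 powr z * (a powr z + b powr z)"
proof -
  have "t powr z \<le> (2 * max a b) powr z"
    using assms by (intro powr_mono2) auto
  also have "\<dots> = 2 powr z * max a b powr z"
    using assms by (simp add: powr_mult)
  also have "max a b powr z \<le> a powr z + b powr z"
    by (simp add: max_def)
  finally show ?thesis
    by simp
qed

lemma cost_nonneg: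
  assumes "finite C" "C \<noteq> {}"
  shows "0 \<le> cost d z X C"
  unfolding cost_def using assms by (intro sum_nonneg) (simp add: Min_ge_iff)

lemma cost_le_sum_assignment:
  assumes "finite C" "\<And>y. y \<in> X \<Longrightarrow> f y \<in> C"
  shows "cost d z X C \<le> (\<Sum>y\<in>X. edist d y (f y) powr z)"
  unfolding cost_def using assms by (intro sum_mono Min_le) auto

lemma cost_eq_sum_nearest_assignment:
  assumes "finite Q" "nearest_assignment d X Q \<sigma>" "0 \<le> z"
  shows "cost d z X Q = (\<Sum>y\<in>X. edist d y (\<sigma> y) powr z)"
  unfolding cost_def
proof (rule sum.cong)
  fix y assume "y \<in> X"
  then have "\<sigma> y \<in> Q" "\<forall>c\<in>Q. edist d y (\<sigma> y) \<le> edist d y c"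
    using assms(2) unfolding nearest_assignment_def by auto
  then show "Min ((\<lambda>c. edist d y c powr z) ` Q) = edist d y (\<sigma> y) powr z"
    using assms(1,3) edist_nonneg by (intro Min_eqI) (auto intro: powr_mono2)
qed simp

lemma nearest_assignment_exists:
  assumes "finite Q" "Q \<noteq> {}"
  shows "\<exists>\<sigma>. nearest_assignment d X Q \<sigma>"
proof -
  have "\<exists>c\<in>Q. \<forall>c'\<in>Q. edist d y c \<le> edist d y c'" for y
    using arg_min_if_finite[OF assms, of "edist d y"] by (meson not_le)
  then show ?thesis
    unfolding nearest_assignment_def by metis
qed

lemma cost_diff_eball_open_le:
  assumes "finite X" "finite Q" "p \<in> Q" "edist d x p = r" "nearest_assignment d X Q \<sigma>" "0 \<le> z"
  shows "cost d z X (Q - eball_open d x r)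
    \<le> 2 powr z * cost d z X Q + 4 powr z * real (card {y\<in>X. \<sigma> y \<in> eball_open d x r}) * r powr z"
proof -
  define moved where "moved y \<longleftrightarrow> \<sigma> y \<in> eball_open d x r" for y
  define f where "f y = (if moved y then p else \<sigma> y)" for y
  have r: "0 \<le> r"
    using assms(4) edist_nonneg by blast
  have \<sigma>Q: "\<sigma> y \<in> Q" if "y \<in> X" for y
    using assms(5) that unfolding nearest_assignment_def by blast
  have f_in: "f y \<in> Q - eball_open d x r" if "y \<in> X" for y
    using \<sigma>Q[OF that] assms(3,4) unfolding f_def moved_def eball_open_def by auto
  have f_le: "edist d y (f y) powr z
      \<le> 2 powr z * edist d y (\<sigma> y) powr z + (if moved y then 4 powr z * r powr z else 0)" for y
  proof (cases "moved y")
    case True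
    have "edist d (\<sigma> y) p \<le> edist d (\<sigma> y) x + edist d x p"
      by (rule edist_triangle)
    also have "\<dots> \<le> 2 * r"
      using True assms(4) unfolding moved_def eball_open_def by (simp add: edist_commute)
    finally have "edist d y p \<le> edist d y (\<sigma> y) + 2 * r"
      using edist_triangle[of d y p "\<sigma> y"] by linarith
    then have "edist d y p powr z \<le> 2 powr z * (edist d y (\<sigma> y) powr z + (2 * r) powr z)"
      using r assms(6) edist_nonneg by (intro powr_le_two_powr_mult_add) auto
    also have "\<dots> = 2 powr z * edist d y (\<sigma> y) powr z + 4 powr z * r powr z"
      using r by (simp add: distrib_left powr_mult flip: powr_mult[of 2 2])
    finally show ?thesis
      using True unfolding f_def by simp
  next
    case False
    have "1 \<le> (2::real) powr z"
      using assms(6) by (intro ge_one_powr_ge_zero) auto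
    then show ?thesis
      using False unfolding f_def by (simp add: mult_le_cancel_right1)
  qed
  have "cost d z X (Q - eball_open d x r) \<le> (\<Sum>y\<in>X. edist d y (f y) powr z)"
    using assms(2) f_in by (intro cost_le_sum_assignment) auto
  also have "\<dots> \<le> (\<Sum>y\<in>X. 2 powr z * edist d y (\<sigma> y) powr z
      + (if moved y then 4 powr z * r powr z else 0))"
    by (intro sum_mono f_le)
  also have "\<dots> = 2 powr z * cost d z X Q
      + 4 powr z * real (card {y\<in>X. \<sigma> y \<in> eball_open d x r}) * r powr z"
    using assms(1,2,5,6)
    by (simp add: sum.distrib sum_distrib_left cost_eq_sum_nearest_assignment
        sum.If_cases Int_def moved_def)
  finally show ?thesis .
qed

lemma card_assigned_eball_half_mult_le:
  assumes "finite X" "finite Q" "finite S" "S \<noteq> {}" "S \<inter> eball_open d x r = {}"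
    and "nearest_assignment d X Q \<sigma>" "0 \<le> z" "0 \<le> r"
  shows "real (card {y\<in>X. \<sigma> y \<in> eball d x (r/2)}) * r powr z
    \<le> 4 powr z * (cost d z X Q + cost d z X S)"
proof -
  define B where "B = {y\<in>X. \<sigma> y \<in> eball d x (r/2)}"
  obtain \<tau> where \<tau>: "nearest_assignment d X S \<tau>"
    using nearest_assignment_exists[OF assms(3,4)] by blast
  define e where "e y = edist d y (\<sigma> y) powr z + edist d y (\<tau> y) powr z" for y
  have e_ge: "(r/2) powr z \<le> 2 powr z * e y" if "y \<in> B" for y
  proof -
    have "\<tau> y \<in> S"
      using \<tau> that unfolding nearest_assignment_def B_def by blast
    then have "r \<le> edist d x (\<tau> y)"
      using assms(5) unfolding eball_open_def by force
    also have "\<dots> \<le> edist d x (\<sigma> y) + (edist d (\<sigma> y) y + edist d y (\<tau> y))"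
      using edist_triangle[of d x "\<tau> y" "\<sigma> y"] edist_triangle[of d "\<sigma> y" "\<tau> y" y] by linarith
    also have "edist d x (\<sigma> y) \<le> r/2"
      using that unfolding B_def eball_def by blast
    finally have "r/2 \<le> edist d y (\<sigma> y) + edist d y (\<tau> y)"
      by (simp add: edist_commute)
    then show ?thesis
      unfolding e_def using assms(7,8) edist_nonneg by (intro powr_le_two_powr_mult_add) auto
  qed
  have "real (card B) * r powr z = 2 powr z * (\<Sum>y\<in>B. (r/2) powr z)"
    using assms(8) by (simp add: powr_mult flip: powr_mult[of 2 "r/2"])
  also have "\<dots> \<le> 2 powr z * (\<Sum>y\<in>B. 2 powr z * e y)"
    by (intro mult_left_mono sum_mono e_ge) auto
  also have "\<dots> \<le> 2 powr z * (\<Sum>y\<in>X. 2 powr z * e y)"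
    using assms(1) unfolding B_def e_def by (intro mult_left_mono sum_mono2) auto
  also have "\<dots> = 4 powr z * (cost d z X Q + cost d z X S)"
    using assms(1,2,3,6,7) \<tau>
    by (simp add: e_def cost_eq_sum_nearest_assignment sum_distrib_left[symmetric]
        sum.distrib[symmetric] powr_mult[symmetric] mult.assoc[symmetric])
  finally show ?thesis
    unfolding B_def .
qed

lemma cost_sandwich_arith:
  fixes c \<alpha> \<beta> cQ cS \<Psi> m :: real
  assumes "1 \<le> c" "1 \<le> \<beta>" "0 \<le> cQ" "0 \<le> m"
    and "cS \<le> c * cQ + 2 * c * m" "m \<le> c * (cQ + cS)"
    and "cQ \<le> \<alpha> * cS" "cQ \<le> \<beta> * \<Psi>" "\<Psi> \<le> \<beta> * cQ"
  shows "cS \<le> 2 * c * \<beta> * (\<Psi> + m)" "\<Psi> + m \<le> (\<alpha> * \<beta> + c * (\<alpha> + 1)) * cS"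
proof -
  have "0 \<le> \<beta> * \<Psi>"
    using assms(3,8) by linarith
  then have "0 \<le> c * \<beta> * \<Psi>"
    using assms(1) by (simp add: mult.assoc)
  moreover have "c * cQ \<le> c * \<beta> * \<Psi>"
    using assms(1,8) by (simp add: mult.assoc)
  moreover have "2 * c * m \<le> 2 * c * \<beta> * m"
    using assms(1,2,4) by (simp add: mult.assoc mult_le_cancel_right1)
  ultimately show "cS \<le> 2 * c * \<beta> * (\<Psi> + m)"
    unfolding distrib_left using assms(5) by linarith
  have "\<beta> * cQ \<le> \<alpha> * \<beta> * cS" "c * cQ \<le> c * \<alpha> * cS"
    using assms(1,2,7) by (simp_all add: mult.assoc mult.left_commute[of \<alpha>])
  then show "\<Psi> + m \<le> (\<alpha> * \<beta> + c * (\<alpha> + 1)) * cS"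
    using assms(6,9) by (simp only: distrib_left distrib_right mult_1_right)
qed

lemma cost_restricted_optimum_sandwich:
  assumes z: "0 \<le> z" and \<beta>: "1 \<le> \<beta>" and X: "finite X" and r_def: "r = edist d x p"
    and Q_adm: "medoids_p X k p Q"
    and Q_approx: "\<forall>C. medoids_p X k p C \<longrightarrow> cost d z X Q \<le> \<alpha> * cost d z X C"
    and \<Psi>_lower: "cost d z X Q / \<beta> \<le> \<Psi>" and \<Psi>_upper: "\<Psi> \<le> \<beta> * cost d z X Q"
    and S_adm: "medoids_p X k p S" and S_avoids: "S \<inter> eball_open d x r = {}"
    and S_opt: "\<forall>C. medoids_p X k p C \<and> C \<inter> eball_open d x r = {} \<longrightarrow> cost d z X S \<le> cost d z X C"
    and \<sigma>: "nearest_assignment d X Q \<sigma>"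
    and count: "card {y\<in>X. \<sigma> y \<in> eball d x r - eball d x (r/2)} \<le> card {y\<in>X. \<sigma> y \<in> eball d x (r/2)}"
  defines "nb \<equiv> real (card {y\<in>X. \<sigma> y \<in> eball d x (r/2)})"
  shows "cost d z X S \<le> 2 * 4 powr z * \<beta> * (\<Psi> + nb * r powr z)"
    and "\<Psi> + nb * r powr z \<le> (\<alpha> * \<beta> + 4 powr z * (\<alpha> + 1)) * cost d z X S"
proof -
  have Q_fin: "finite Q" "p \<in> Q" "Q \<noteq> {}" and S_fin: "finite S" "S \<noteq> {}"
    using X Q_adm S_adm finite_subset unfolding medoids_p_def by blast+
  have r: "0 \<le> r"
    using r_def edist_nonneg by blast
  have four: "1 \<le> (4::real) powr z" "(2::real) powr z \<le> 4 powr z"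
    using z by (auto intro: ge_one_powr_ge_zero powr_mono2)
  define inner where "inner = {y\<in>X. \<sigma> y \<in> eball d x (r/2)}"
  define annulus where "annulus = {y\<in>X. \<sigma> y \<in> eball d x r - eball d x (r/2)}"
  have "card {y\<in>X. \<sigma> y \<in> eball_open d x r} \<le> card (inner \<union> annulus)"
    using X unfolding inner_def annulus_def eball_def eball_open_def
    by (intro card_mono) auto
  also have "\<dots> \<le> 2 * card inner"
    using card_Un_le[of inner annulus] count unfolding inner_def annulus_def by linarith
  finally have "real (card {y\<in>X. \<sigma> y \<in> eball_open d x r}) \<le> 2 * nb"
    unfolding nb_def inner_def by simp
  then have n_open: "4 powr z * real (card {y\<in>X. \<sigma> y \<in> eball_open d x r}) * r powr z
      \<le> 4 powr z * (2 * nb) * r powr z"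
    by (intro mult_left_mono mult_right_mono) auto
  have "medoids_p X k p (Q - eball_open d x r)"
    using r_def Q_adm Q_fin card_mono[of Q "Q - eball_open d x r"]
    unfolding medoids_p_def eball_open_def by auto
  then have "cost d z X S \<le> cost d z X (Q - eball_open d x r)"
    using S_opt by blast
  also have "\<dots> \<le> 2 powr z * cost d z X Q
      + 4 powr z * real (card {y\<in>X. \<sigma> y \<in> eball_open d x r}) * r powr z"
    using z X r_def \<sigma> Q_fin by (intro cost_diff_eball_open_le) auto
  also have "\<dots> \<le> 4 powr z * cost d z X Q + 2 * 4 powr z * (nb * r powr z)"
    using n_open mult_right_mono[OF four(2) cost_nonneg[OF Q_fin(1,3), of d z X]]
    by (simp only: mult_ac)
  finally have upper: "cost d z X S \<le> 4 powr z * cost d z X Q + 2 * 4 powr z * (nb * r powr z)" .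
  have lower: "nb * r powr z \<le> 4 powr z * (cost d z X Q + cost d z X S)"
    unfolding nb_def using z X S_avoids \<sigma> Q_fin S_fin r by (intro card_assigned_eball_half_mult_le) auto
  have "cost d z X Q \<le> \<beta> * \<Psi>"
    using \<beta> \<Psi>_lower by (simp add: divide_le_eq mult.commute)
  then show "cost d z X S \<le> 2 * 4 powr z * \<beta> * (\<Psi> + nb * r powr z)"
    and "\<Psi> + nb * r powr z \<le> (\<alpha> * \<beta> + 4 powr z * (\<alpha> + 1)) * cost d z X S"
    using cost_sandwich_arith[OF four(1) \<beta> cost_nonneg[OF Q_fin(1,3)] _ upper lower]
      Q_approx \<Psi>_upper S_adm unfolding nb_def by auto
qed

theorem lemma3p9:
  fixes z \<alpha> \<beta> :: real
  assumes "z \<ge> 1" and "\<alpha> \<ge> 1" and "\<beta> \<ge> 1"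
  shows "\<exists>\<gamma>1 \<gamma>2. \<gamma>1 \<ge> 1 \<and> \<gamma>2 \<ge> 1 \<and>
    (\<forall>(d::nat) (\<Delta>::nat) X (k::nat) x p r Q \<Psi> S \<sigma>.
      X \<subseteq> grid d \<Delta> \<and> finite X \<and> x \<in> X \<and> p \<in> X \<and> r = edist d x p \<and>
      medoids_p X k p Q \<and>
      (\<forall>C. medoids_p X k p C \<longrightarrow> cost d z X Q \<le> \<alpha> * cost d z X C) \<and>
      cost d z X Q / \<beta> \<le> \<Psi> \<and> \<Psi> \<le> \<beta> * cost d z X Q \<and>
      medoids_p X k p S \<and> S \<inter> eball_open d x r = {} \<and>
      (\<forall>C. medoids_p X k p C \<and> C \<inter> eball_open d x r = {} \<longrightarrow>
           cost d z X S \<le> cost d z X C) \<and>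
      nearest_assignment d X Q \<sigma> \<and>
      card {y\<in>X. \<sigma> y \<in> eball d x (r/2)} \<ge>
        card {y\<in>X. \<sigma> y \<in> eball d x r - eball d x (r/2)}
      \<longrightarrow>
      (let nb = real (card {y\<in>X. \<sigma> y \<in> eball d x (r/2)}) in
        cost d z X S \<le> \<gamma>1 * (\<Psi> + nb * r powr z) \<and>
        \<gamma>1 * (\<Psi> + nb * r powr z) \<le> (\<gamma>1 * \<gamma>2) * cost d z X S))"
proof -
  define \<gamma>1 where "\<gamma>1 = 2 * 4 powr z * \<beta>"
  define \<gamma>2 where "\<gamma>2 = \<alpha> * \<beta> + 4 powr z * (\<alpha> + 1)"
  have z: "0 \<le> z" and four: "1 \<le> (4::real) powr z"
    using assms(1) by (auto intro: ge_one_powr_ge_zero)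
  have \<gamma>1: "1 \<le> \<gamma>1"
    unfolding \<gamma>1_def using four assms(3) by (intro mult_ge1_I) auto
  have \<gamma>2: "1 \<le> \<gamma>2"
    unfolding \<gamma>2_def using assms(2,3) mult_ge1_I[of \<alpha> \<beta>] by (intro add_increasing2) auto
  show ?thesis
  proof (rule exI[of _ \<gamma>1], rule exI[of _ \<gamma>2], intro conjI \<gamma>1 \<gamma>2 allI impI, elim conjE, goal_cases)
    case (1 d \<Delta> X k x p r Q \<Psi> S \<sigma>)
    define m where "m = real (card {y\<in>X. \<sigma> y \<in> eball d x (r/2)}) * r powr z"
    have "cost d z X S \<le> \<gamma>1 * (\<Psi> + m)" "\<Psi> + m \<le> \<gamma>2 * cost d z X S"
      using cost_restricted_optimum_sandwich[OF z assms(3) 1(2,5-14)]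
      unfolding \<gamma>1_def \<gamma>2_def m_def by auto
    moreover have "\<gamma>1 * (\<Psi> + m) \<le> \<gamma>1 * (\<gamma>2 * cost d z X S)"
      using calculation(2) \<gamma>1 by (intro mult_left_mono) auto
    ultimately show ?case
      unfolding Let_def m_def[symmetric] mult.assoc by (intro conjI)
  qed
qed

end
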